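(* There is an infinite family of graphs $G$ for which $\tau^*_2(G) \leq (\frac{3}{4}+o(1))\,\tau^*_3(G)$, where $o(1)$ tends to $0$ as the number of vertices of $G$ tends to infinity.
   Context: A triangle of a graph $G$ is a set of three pairwise adjacent vertices, identified with its three edges. For an integer $k\ge1$, a $k$-multi-transversal of $G$ is a multiset $F$ of edges such that every triangle of $G$ contains at least $k$ elements of $F$ (counted with multiplicity); $\tau^*_k(G)$ is the minimum of $|F|/k$ over all $k$-multi-transversals $F$ (equivalently, the minimum total weight of an assignment $z:E(G)\to\{0,1/k,\dots,1\}$ giving every triangle total weight at least $1$). *)

theory Defs
  imports Complex_Main
begin

definition simple_graph :: "'a set \<Rightarrow> 'a set set \<Rightarrow> bool" where
  "simple_graph V E \<longleftrightarrow> finite V \<and> (\<forall>e\<in>E. e \<subseteq> V \<and> card e = 2)"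

definition triangles :: "'a set set \<Rightarrow> 'a set set" where
  "triangles E = {{a, b, c} | a b c. a \<noteq> b \<and> b \<noteq> c \<and> a \<noteq> c \<and>
                     {a, b} \<in> E \<and> {b, c} \<in> E \<and> {a, c} \<in> E}"

definition tri_edges :: "'a set \<Rightarrow> 'a set set" where
  "tri_edges T = {e. e \<subseteq> T \<and> card e = 2}"

text \<open>A k-multi-transversal, given as a multiset of edges, i.e. a multiplicity
  function F supported on E, such that each triangle contains at least k elements.\<close>
definition multi_transversal :: "'a set set \<Rightarrow> nat \<Rightarrow> ('a set \<Rightarrow> nat) \<Rightarrow> bool" where
  "multi_transversal E k F \<longleftrightarrow> (\<forall>e. e \<notin> E \<longrightarrow> F e = 0) \<and>
     (\<forall>T\<in>triangles E. (\<Sum>e\<in>tri_edges T. F e) \<ge> k)"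

definition tau_star :: "nat \<Rightarrow> 'a set set \<Rightarrow> real" where
  "tau_star k E = real (LEAST m. \<exists>F. multi_transversal E k F \<and> (\<Sum>e\<in>E. F e) = m) / real k"

end

theory Submission
  imports Defs "HOL-Library.Nat_Bijection" "HOL-Real_Asymp.Real_Asymp"
begin

text \<open>Let \<open>H\<close> be a triangle-free graph on \<open>L\<close> with independence number \<open>\<alpha>\<close>, and join
  a new apex to every vertex of \<open>L\<close>. The triangles of this cone are the apex together
  with an edge of \<open>H\<close>. Taking every spoke once is a 2-transversal, so
  \<open>\<tau>\<^sup>*\<^sub>2 \<le> |L|/2\<close>. For a 3-transversal \<open>F\<close>, the vertices whose spoke has
  multiplicity at most one span a subgraph all of whose edges have multiplicity at least
  one, and a greedy argument gives \<open>2|L| \<le> |F| + 4\<alpha>\<close>. Hence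
  \<open>\<tau>\<^sup>*\<^sub>2 / \<tau>\<^sup>*\<^sub>3 \<le> 3/4 + O(\<alpha>/|L|)\<close>, and it remains to find triangle-free
  graphs with \<open>|L|/\<alpha> \<rightarrow> \<infinity>\<close>. They are blow-ups of weighted Mycielski graphs
  (each vertex replaced by as many independent copies as its weight). The weighted
  Mycielski step, applied to a triangle-free graph whose ratio \<open>r\<close> = total weight /
  maximum weight of an independent set is certified by an optimal fractional colouring,
  produces a certified graph with ratio \<open>r + 1/r\<close>, so \<open>r\<^sup>2\<close> grows linearly with
  the number of steps.\<close>

definition indep :: "('a \<Rightarrow> 'a \<Rightarrow> bool) \<Rightarrow> 'a set \<Rightarrow> bool" where
  "indep R I \<longleftrightarrow> (\<forall>x\<in>I. \<forall>y\<in>I. \<not> R x y)"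

definition edges_in :: "('a \<Rightarrow> 'a \<Rightarrow> bool) \<Rightarrow> 'a set \<Rightarrow> 'a set set" where
  "edges_in R S = {{x, y} | x y. x \<in> S \<and> y \<in> S \<and> R x y}"

lemma finite_edges_in:
  assumes "finite S"
  shows "finite (edges_in R S)"
proof (rule finite_subset)
  show "edges_in R S \<subseteq> (\<lambda>(x, y). {x, y}) ` (S \<times> S)"
    unfolding edges_in_def by auto
qed (use assms in simp)

lemma edges_in_mono: "S \<subseteq> S' \<Longrightarrow> edges_in R S \<subseteq> edges_in R S'"
  unfolding edges_in_def by blast

lemma card_edges_in_insert:
  assumes "finite S" "v \<notin> S"
  shows "card (edges_in R S) + card {u \<in> S. R v u} \<le> card (edges_in R (insert v S))"
proof -
  let ?N = "{u \<in> S. R v u}" and ?star = "\<lambda>u. {v, u}"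
  have "edges_in R S \<inter> ?star ` ?N = {}"
    using assms(2) unfolding edges_in_def by (auto simp: doubleton_eq_iff)
  moreover have "inj_on ?star ?N" by (auto simp: inj_on_def doubleton_eq_iff)
  ultimately have "card (edges_in R S) + card ?N = card (edges_in R S \<union> ?star ` ?N)"
    using assms(1) by (simp add: card_Un_disjoint card_image finite_edges_in)
  also have "\<dots> \<le> card (edges_in R (insert v S))"
    using assms(1) finite_edges_in[of "insert v S" R]
    by (intro card_mono) (auto simp: edges_in_def)
  finally show ?thesis .
qed

lemma indep_insert:
  assumes "indep R I" "\<And>y. y \<in> I \<Longrightarrow> \<not> R v y"
    and "\<And>x y. R x y \<Longrightarrow> R y x" "\<not> R v v"
  shows "indep R (insert v I)"
  using assms unfolding indep_def by blast

text \<open>Greedy: a vertex of degree at least two is deleted, paying for itself with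
  two edges; otherwise it joins the independent set and is deleted together with
  its at most one neighbour.\<close>
lemma large_indep_set_or_many_edges:
  assumes "finite S" and sym: "\<And>x y. R x y \<Longrightarrow> R y x" and irrefl: "\<And>x. \<not> R x x"
  shows "\<exists>I\<subseteq>S. indep R I \<and> 2 * card S \<le> card (edges_in R S) + 4 * card I"
  using assms(1)
proof (induction S rule: finite_psubset_induct)
  case (psubset S)
  show ?case
  proof (cases "S = {}")
    case True
    then show ?thesis unfolding indep_def by auto
  next
    case False
    then obtain v where v: "v \<in> S" by auto
    define N where "N = {u \<in> S. R v u}"
    have "finite N" using psubset.hyps N_def by simp
    show ?thesis
    proof (cases "2 \<le> card N")
      case True
      obtain I where I: "I \<subseteq> S - {v}" "indep R I"
        "2 * card (S - {v}) \<le> card (edges_in R (S - {v})) + 4 * card I"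
        using psubset.IH[of "S - {v}"] v by blast
      have "N = {u \<in> S - {v}. R v u}" using irrefl unfolding N_def by auto
      then have "card (edges_in R (S - {v})) + card N \<le> card (edges_in R S)"
        using card_edges_in_insert[of "S - {v}" v R] psubset.hyps v
        by (simp add: insert_absorb)
      moreover have "card S = card (S - {v}) + 1"
        using psubset.hyps v by (metis card_Suc_Diff1 Suc_eq_plus1)
      ultimately show ?thesis using I True by (intro exI[of _ I]) auto
    next
      case False
      let ?S' = "S - insert v N"
      obtain I where I: "I \<subseteq> ?S'" "indep R I"
        "2 * card ?S' \<le> card (edges_in R ?S') + 4 * card I"
        using psubset.IH[of ?S'] v by blast
      have "insert v N \<subseteq> S" using v N_def by auto
      then have "card S = card (insert v N) + card ?S'"
        using card_Int_Diff[OF psubset.hyps, of "insert v N"] by (simp add: Int_absorb1)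
      moreover have "card (insert v N) \<le> 2"
        using False \<open>finite N\<close> by (simp add: card_insert_if)
      moreover have "card (edges_in R ?S') \<le> card (edges_in R S)"
        using psubset.hyps by (intro card_mono finite_edges_in) (auto simp: edges_in_def)
      moreover have "indep R (insert v I)"
        using I(1) by (intro indep_insert[OF I(2) _ sym irrefl]) (auto simp: N_def)
      moreover have "card (insert v I) = card I + 1"
        using I(1) psubset.hyps by (subst card_insert_disjoint) (auto intro: finite_subset)
      moreover have "insert v I \<subseteq> S" using I(1) v by blast
      ultimately show ?thesis using I(3) by (intro exI[of _ "insert v I"]) simp
    qed
  qed
qed

lemma tri_edges_triangle:
  assumes "a \<noteq> b" "b \<noteq> c" "a \<noteq> c"
  shows "tri_edges {a, b, c} = {{a, b}, {b, c}, {a, c}}"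
proof -
  have "e \<in> {{a, b}, {b, c}, {a, c}}" if "e \<subseteq> {a, b, c}" "card e = 2" for e
  proof -
    from that(2) obtain x y where "e = {x, y}" "x \<noteq> y" by (auto simp: card_2_iff)
    with that(1) show ?thesis by auto
  qed
  moreover have "card {a, b} = 2" "card {b, c} = 2" "card {a, c} = 2" using assms by auto
  ultimately show ?thesis unfolding tri_edges_def by auto
qed

lemma multi_transversal_const: "multi_transversal E k (\<lambda>e. if e \<in> E then k else 0)"
  unfolding multi_transversal_def
proof (intro conjI allI impI ballI)
  fix T assume "T \<in> triangles E"
  then obtain a b c where T: "T = {a, b, c}" "a \<noteq> b" "b \<noteq> c" "a \<noteq> c"
    "{a, b} \<in> E" "{b, c} \<in> E" "{a, c} \<in> E"
    unfolding triangles_def by blast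
  then have edges: "tri_edges T = {{a, b}, {b, c}, {a, c}}" using tri_edges_triangle by simp
  from T have "k \<le> (if {a, b} \<in> E then k else 0)" by simp
  also have "\<dots> \<le> (\<Sum>e\<in>tri_edges T. if e \<in> E then k else 0)"
    unfolding edges by (intro member_le_sum) auto
  finally show "k \<le> (\<Sum>e\<in>tri_edges T. if e \<in> E then k else 0)" .
qed simp

lemma tau_star_le:
  assumes "multi_transversal E k F"
  shows "tau_star k E \<le> real (\<Sum>e\<in>E. F e) / real k"
proof -
  have "(LEAST m. \<exists>F. multi_transversal E k F \<and> (\<Sum>e\<in>E. F e) = m) \<le> (\<Sum>e\<in>E. F e)"
    using assms by (intro Least_le) blast
  then show ?thesis unfolding tau_star_def by (intro divide_right_mono of_nat_mono) simp_all
qed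

lemma tau_star_ge:
  assumes "\<And>F. multi_transversal E k F \<Longrightarrow> B \<le> real (\<Sum>e\<in>E. F e)"
  shows "B / real k \<le> tau_star k E"
proof -
  let ?P = "\<lambda>m. \<exists>F. multi_transversal E k F \<and> (\<Sum>e\<in>E. F e) = m"
  have "?P (\<Sum>e\<in>E. if e \<in> E then k else 0)"
    using multi_transversal_const by blast
  then have "?P (LEAST m. ?P m)" by (rule LeastI)
  then obtain F where "multi_transversal E k F" "(\<Sum>e\<in>E. F e) = (LEAST m. ?P m)" by blast
  then have "B \<le> real (LEAST m. ?P m)" using assms by metis
  then show ?thesis unfolding tau_star_def by (intro divide_right_mono) simp_all
qed

section \<open>The cone over a triangle-free graph\<close>

locale triangle_free_cone =
  fixes apex :: 'a and L :: "'a set" and R :: "'a \<Rightarrow> 'a \<Rightarrow> bool" and \<alpha> :: nat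
  assumes finite_L: "finite L" and apex_notin_L: "apex \<notin> L"
    and R_in_L: "R x y \<Longrightarrow> x \<in> L \<and> y \<in> L"
    and R_sym: "R x y \<Longrightarrow> R y x" and R_irrefl: "\<not> R x x"
    and R_triangle_free: "R x y \<Longrightarrow> R y z \<Longrightarrow> R x z \<Longrightarrow> False"
    and indep_card_le: "I \<subseteq> L \<Longrightarrow> indep R I \<Longrightarrow> card I \<le> \<alpha>"
begin

definition spokes :: "'a set set" where
  "spokes = (\<lambda>x. {apex, x}) ` L"

definition cone_edges :: "'a set set" where
  "cone_edges = spokes \<union> edges_in R L"

lemma inj_on_spoke: "inj_on (\<lambda>x. {apex, x}) L"
  using apex_notin_L by (auto simp: inj_on_def doubleton_eq_iff)

lemma edges_in_L_eq: "edges_in R L = {{x, y} | x y. R x y}"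
  unfolding edges_in_def using R_in_L by blast

lemma spokes_disjoint: "spokes \<inter> edges_in R L = {}"
  unfolding spokes_def edges_in_L_eq using R_in_L apex_notin_L by (auto simp: doubleton_eq_iff)

lemma finite_cone_edges: "finite cone_edges"
  unfolding cone_edges_def spokes_def using finite_L finite_edges_in by blast

lemma simple_graph_cone: "simple_graph (insert apex L) cone_edges"
  unfolding simple_graph_def cone_edges_def spokes_def edges_in_L_eq
  using finite_L apex_notin_L R_in_L R_irrefl by (auto simp: card_2_iff) metis+

lemma cone_edge_cases:
  assumes "{u, v} \<in> cone_edges" "u \<noteq> v"
  shows "R u v \<or> (u = apex \<and> v \<in> L) \<or> (v = apex \<and> u \<in> L)"
  using assms unfolding cone_edges_def spokes_def edges_in_L_eq
  by (auto simp: doubleton_eq_iff dest: R_sym)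

lemma triangle_cone_edges:
  assumes "R x y"
  shows "{apex, x, y} \<in> triangles cone_edges"
proof -
  have "x \<in> L" "y \<in> L" "x \<noteq> y" using assms R_in_L R_irrefl by auto
  moreover have "{x, y} \<in> cone_edges"
    using assms unfolding cone_edges_def edges_in_L_eq by blast
  ultimately show ?thesis
    unfolding triangles_def cone_edges_def spokes_def using apex_notin_L by blast
qed

lemma triangles_cone_edges: "triangles cone_edges = {{apex, x, y} | x y. R x y}"
proof
  show "triangles cone_edges \<subseteq> {{apex, x, y} | x y. R x y}"
  proof
    fix T assume "T \<in> triangles cone_edges"
    then obtain a b d where T: "T = {a, b, d}" "a \<noteq> b" "b \<noteq> d" "a \<noteq> d"
      and ab: "R a b \<or> (a = apex \<and> b \<in> L) \<or> (b = apex \<and> a \<in> L)"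
      and bd: "R b d \<or> (b = apex \<and> d \<in> L) \<or> (d = apex \<and> b \<in> L)"
      and ad: "R a d \<or> (a = apex \<and> d \<in> L) \<or> (d = apex \<and> a \<in> L)"
      unfolding triangles_def using cone_edge_cases by blast
    consider "a = apex" | "b = apex" | "d = apex" | "apex \<notin> T" using T(1) by blast
    then show "T \<in> {{apex, x, y} | x y. R x y}"
    proof cases
      case 1
      then have "R b d" using bd T by auto
      then show ?thesis using T 1 by blast
    next
      case 2
      then have "R a d" using ad T by auto
      moreover have "T = {apex, a, d}" using T 2 by auto
      ultimately show ?thesis by blast
    next
      case 3
      then have "R a b" using ab T by auto
      moreover have "T = {apex, a, b}" using T 3 by auto
      ultimately show ?thesis by blast
    next
      case 4
      then have False using ab bd ad T(1) R_triangle_free by blast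
      then show ?thesis ..
    qed
  qed
qed (use triangle_cone_edges in blast)

lemma tri_edges_cone:
  assumes "R x y"
  shows "tri_edges {apex, x, y} = {{apex, x}, {x, y}, {apex, y}}"
    and "{apex, x} \<noteq> {x, y}" "{apex, x} \<noteq> {apex, y}" "{x, y} \<noteq> {apex, y}"
proof -
  have "x \<in> L" "y \<in> L" "x \<noteq> y" using R_in_L R_irrefl assms by auto
  then have "apex \<noteq> x" "apex \<noteq> y" "x \<noteq> y" using apex_notin_L by auto
  then show "tri_edges {apex, x, y} = {{apex, x}, {x, y}, {apex, y}}"
    and "{apex, x} \<noteq> {x, y}" "{apex, x} \<noteq> {apex, y}" "{x, y} \<noteq> {apex, y}"
    using tri_edges_triangle[of apex x y] by (auto simp: doubleton_eq_iff insert_commute)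
qed

lemma tau_star_2_cone_le: "tau_star 2 cone_edges \<le> real (card L) / 2"
proof -
  define F where "F e = (if e \<in> spokes then 1 else 0 :: nat)" for e
  have "multi_transversal cone_edges 2 F"
    unfolding multi_transversal_def
  proof (intro conjI allI impI ballI)
    fix e assume "e \<notin> cone_edges"
    then show "F e = 0" unfolding F_def cone_edges_def by auto
  next
    fix T assume "T \<in> triangles cone_edges"
    then obtain x y where T: "T = {apex, x, y}" "R x y"
      using triangles_cone_edges by auto
    then have "{apex, x} \<in> spokes" "{apex, y} \<in> spokes" "{x, y} \<notin> spokes"
      using R_in_L apex_notin_L unfolding spokes_def by (auto simp: doubleton_eq_iff)
    then show "2 \<le> (\<Sum>e\<in>tri_edges T. F e)"
      using tri_edges_cone[OF T(2)] T(1) by (simp add: F_def)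
  qed
  moreover have "(\<Sum>e\<in>cone_edges. F e) = card L"
  proof -
    have "(\<Sum>e\<in>cone_edges. F e) = card (cone_edges \<inter> spokes)"
      unfolding F_def using finite_cone_edges by (simp add: sum.If_cases)
    also have "cone_edges \<inter> spokes = spokes" unfolding cone_edges_def by auto
    finally show ?thesis unfolding spokes_def using inj_on_spoke by (simp add: card_image)
  qed
  ultimately show ?thesis using tau_star_le by fastforce
qed

lemma sum_cone_edges:
  "(\<Sum>e\<in>cone_edges. F e) = (\<Sum>x\<in>L. F {apex, x}) + (\<Sum>e\<in>edges_in R L. F e)"
proof -
  have "finite spokes" "finite (edges_in R L)"
    using finite_cone_edges unfolding cone_edges_def by auto
  then have "(\<Sum>e\<in>cone_edges. F e) = (\<Sum>e\<in>spokes. F e) + (\<Sum>e\<in>edges_in R L. F e)"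
    unfolding cone_edges_def using spokes_disjoint by (simp add: sum.union_disjoint)
  then show ?thesis unfolding spokes_def using inj_on_spoke by (simp add: sum.reindex)
qed

text \<open>Every edge between vertices whose spokes have multiplicity at most one must itself
  have multiplicity at least one; all other spokes have multiplicity at least two.\<close>
lemma multi_transversal_3_cone_size:
  assumes F: "multi_transversal cone_edges 3 F"
  shows "2 * card L \<le> (\<Sum>e\<in>cone_edges. F e) + 4 * \<alpha>"
proof -
  define S where "S = {x \<in> L. F {apex, x} \<le> 1}"
  have "finite S" "S \<subseteq> L" using finite_L unfolding S_def by auto
  have "\<exists>I\<subseteq>S. indep R I \<and> 2 * card S \<le> card (edges_in R S) + 4 * card I"
    by (rule large_indep_set_or_many_edges) (use \<open>finite S\<close> R_sym R_irrefl in auto)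
  then obtain I where I: "I \<subseteq> S" "indep R I" "2 * card S \<le> card (edges_in R S) + 4 * card I"
    by blast
  have "card I \<le> \<alpha>" using indep_card_le I \<open>S \<subseteq> L\<close> by auto
  have "2 * card (L - S) = (\<Sum>x\<in>L - S. 2)" by simp
  also have "\<dots> \<le> (\<Sum>x\<in>L - S. F {apex, x})" by (intro sum_mono) (auto simp: S_def)
  also have "\<dots> \<le> (\<Sum>x\<in>L. F {apex, x})" using finite_L by (intro sum_mono2) auto
  finally have spokes_part: "2 * card (L - S) \<le> (\<Sum>x\<in>L. F {apex, x})" .
  have "card (edges_in R S) = (\<Sum>e\<in>edges_in R S. 1)" by simp
  also have "\<dots> \<le> (\<Sum>e\<in>edges_in R S. F e)"
  proof (intro sum_mono)
    fix e assume "e \<in> edges_in R S"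
    then obtain x y where e: "e = {x, y}" "x \<in> S" "y \<in> S" "R x y" unfolding edges_in_def by auto
    have "{apex, x, y} \<in> triangles cone_edges" using triangle_cone_edges[OF e(4)] .
    then have "3 \<le> (\<Sum>e\<in>tri_edges {apex, x, y}. F e)"
      using F unfolding multi_transversal_def by blast
    then have "3 \<le> F {apex, x} + F {x, y} + F {apex, y}"
      using tri_edges_cone[OF e(4)] by simp
    then show "1 \<le> F e" using e unfolding S_def by auto
  qed
  also have "\<dots> \<le> (\<Sum>e\<in>edges_in R L. F e)"
    using finite_edges_in[OF finite_L] edges_in_mono[OF \<open>S \<subseteq> L\<close>] by (intro sum_mono2) auto
  finally have base_part: "card (edges_in R S) \<le> (\<Sum>e\<in>edges_in R L. F e)" .
  have "card L = card S + card (L - S)"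
    using card_Int_Diff[OF finite_L, of S] \<open>S \<subseteq> L\<close> by (simp add: Int_absorb1)
  then show ?thesis
    using spokes_part base_part I(3) \<open>card I \<le> \<alpha>\<close> sum_cone_edges[of F] by linarith
qed

lemma tau_star_3_cone_ge: "real (2 * card L) - 4 * real \<alpha> \<le> 3 * tau_star 3 cone_edges"
proof -
  have "(real (2 * card L) - 4 * real \<alpha>) / real 3 \<le> tau_star 3 cone_edges"
  proof (rule tau_star_ge)
    fix F assume "multi_transversal cone_edges 3 F"
    then have "real (2 * card L) \<le> real ((\<Sum>e\<in>cone_edges. F e) + 4 * \<alpha>)"
      using multi_transversal_3_cone_size of_nat_mono by blast
    then show "real (2 * card L) - 4 * real \<alpha> \<le> real (\<Sum>e\<in>cone_edges. F e)" by simp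
  qed
  then show ?thesis by simp
qed

end

section \<open>Weighted graphs with optimal fractional colourings\<close>

definition cover_count :: "'a set list \<Rightarrow> 'a \<Rightarrow> nat" where
  "cover_count l v = length (filter (\<lambda>I. v \<in> I) l)"

lemma cover_count_append [simp]: "cover_count (xs @ ys) v = cover_count xs v + cover_count ys v"
  by (simp add: cover_count_def)

lemma cover_count_concat_replicate [simp]:
  "cover_count (concat (replicate k xs)) v = k * cover_count xs v"
  by (induction k) (auto simp: cover_count_def)

lemma cover_count_replicate [simp]: "cover_count (replicate k S) v = (if v \<in> S then k else 0)"
  by (induction k) (auto simp: cover_count_def)

lemma cover_count_map: "cover_count (map f l) v = length (filter (\<lambda>I. v \<in> f I) l)"
  by (simp add: cover_count_def filter_map comp_def)

lemma sum_list_sum_Int: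
  "finite X \<Longrightarrow> (\<Sum>I\<leftarrow>l. sum w (X \<inter> I)) = (\<Sum>v\<in>X. w v * cover_count l v)"
proof (induction l)
  case Nil
  then show ?case by (simp add: cover_count_def)
next
  case (Cons I l)
  have "sum w (X \<inter> I) = (\<Sum>v\<in>X. if v \<in> I then w v else 0)"
    using Cons.prems by (rule sum.inter_restrict)
  then show ?case
    using Cons by (auto simp: cover_count_def sum.distrib[symmetric] intro!: sum.cong)
qed

lemma sum_list_sum_Int_Diff:
  "finite X \<Longrightarrow> (\<Sum>I\<leftarrow>l. sum w (X \<inter> I)) + (\<Sum>I\<leftarrow>l. sum w (X - I)) = length l * sum w X"
proof (induction l)
  case (Cons I l)
  have "sum w (X \<inter> I) + sum w (X - I) = sum w X"
    using Cons.prems by (metis add.commute sum.Int_Diff)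
  then show ?case using Cons by simp
qed simp

definition nbhd :: "('a \<Rightarrow> 'a \<Rightarrow> bool) \<Rightarrow> 'a set \<Rightarrow> 'a set" where
  "nbhd R A = {v. \<exists>x\<in>A. R x v}"

locale weighted_triangle_free_graph =
  fixes n :: nat and adj :: "nat \<Rightarrow> nat \<Rightarrow> bool" and w :: "nat \<Rightarrow> nat" and D :: nat
  assumes adj_lt: "adj x y \<Longrightarrow> x < n \<and> y < n"
    and adj_sym: "adj x y \<Longrightarrow> adj y x" and adj_irrefl: "\<not> adj x x"
    and adj_triangle_free: "adj x y \<Longrightarrow> adj y z \<Longrightarrow> adj x z \<Longrightarrow> False"
    and indep_weight_le: "I \<subseteq> {..<n} \<Longrightarrow> indep adj I \<Longrightarrow> sum w I \<le> D"

text \<open>The list \<open>cover\<close> of independent sets covers every vertex exactly \<open>T\<close> times,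
  and \<open>weight_balance\<close> makes it an optimal fractional colouring: the weighted
  fractional chromatic number is exactly the total weight divided by \<open>D\<close>.\<close>
locale fractional_certificate = weighted_triangle_free_graph +
  fixes cover :: "nat set list" and T :: nat
  assumes cover_subset: "I \<in> set cover \<Longrightarrow> I \<subseteq> {..<n}"
    and cover_indep: "I \<in> set cover \<Longrightarrow> indep adj I"
    and cover_count_eq: "v < n \<Longrightarrow> cover_count cover v = T"
    and weight_balance: "sum w {..<n} * T = length cover * D"
    and T_pos: "1 \<le> T" and T_le_length: "T \<le> length cover" and D_pos: "1 \<le> D"
begin

lemma sum_list_cover_Int:
  assumes "X \<subseteq> {..<n}"
  shows "(\<Sum>I\<leftarrow>cover. sum w (X \<inter> I)) = T * sum w X"
proof -
  have "finite X" using assms finite_subset by blast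
  then have "(\<Sum>I\<leftarrow>cover. sum w (X \<inter> I)) = (\<Sum>v\<in>X. w v * T)"
    using assms cover_count_eq by (auto simp: sum_list_sum_Int intro!: sum.cong)
  then show ?thesis by (simp add: sum_distrib_left mult.commute)
qed

text \<open>For each colour class \<open>I\<close>, the set \<open>(I - nbhd adj A) \<union> (A - I)\<close> is independent;
  summing its weight over the cover gives the bound.\<close>
lemma indep_weight_le_nbhd:
  assumes A: "A \<subseteq> {..<n}" "indep adj A"
  shows "(length cover - T) * sum w A \<le> T * sum w (nbhd adj A)"
proof -
  let ?N = "nbhd adj A" and ?U = "{..<n}" and ?m = "length cover"
  have N_sub: "?N \<subseteq> ?U" using adj_lt unfolding nbhd_def by blast
  have swap: "sum w ((?U - ?N) \<inter> I) + sum w (A - I) \<le> D" if I: "I \<in> set cover" for I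
  proof -
    let ?J = "(I - ?N) \<union> (A - I)"
    have "indep adj ?J"
      using A(2) cover_indep[OF I] adj_sym unfolding indep_def nbhd_def by blast
    moreover have "?J \<subseteq> ?U" using A(1) cover_subset[OF I] by blast
    ultimately have "sum w ?J \<le> D" by (rule indep_weight_le[rotated])
    moreover have "sum w ?J = sum w (I - ?N) + sum w (A - I)"
      using A(1) cover_subset[OF I] by (intro sum.union_disjoint) (auto intro: finite_subset)
    moreover have "(?U - ?N) \<inter> I = I - ?N" using cover_subset[OF I] by blast
    ultimately show ?thesis by simp
  qed
  have "(\<Sum>I\<leftarrow>cover. sum w ((?U - ?N) \<inter> I)) + (\<Sum>I\<leftarrow>cover. sum w (A - I))
      = (\<Sum>I\<leftarrow>cover. sum w ((?U - ?N) \<inter> I) + sum w (A - I))"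
    by (simp add: sum_list_addf)
  also have "\<dots> \<le> (\<Sum>I\<leftarrow>cover. D)" using swap by (rule sum_list_mono)
  also have "\<dots> = T * sum w ?U" using weight_balance by (simp add: sum_list_triv mult.commute)
  finally have "T * sum w (?U - ?N) + (\<Sum>I\<leftarrow>cover. sum w (A - I)) \<le> T * sum w ?U"
    using sum_list_cover_Int[of "?U - ?N"] by simp
  moreover have "(\<Sum>I\<leftarrow>cover. sum w (A - I)) = (?m - T) * sum w A"
    using sum_list_sum_Int_Diff[of A w cover] sum_list_cover_Int[OF A(1)] A(1) T_le_length
    by (simp add: finite_subset diff_mult_distrib)
  moreover have "sum w ?U = sum w (?U - ?N) + sum w ?N"
    using N_sub by (simp add: sum.subset_diff)
  ultimately show ?thesis by (simp add: algebra_simps)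
qed

end

section \<open>The weighted Mycielski construction\<close>

text \<open>The Mycielski graph lives on \<open>{..<2 * n + 1}\<close>: \<open>x < n\<close> is an original vertex,
  \<open>x + n\<close> its shadow (adjacent to the neighbours of \<open>x\<close>), and \<open>2 * n\<close> the apex,
  adjacent to all shadows.\<close>
definition myc_adj :: "nat \<Rightarrow> (nat \<Rightarrow> nat \<Rightarrow> bool) \<Rightarrow> nat \<Rightarrow> nat \<Rightarrow> bool" where
  "myc_adj n adj x y \<longleftrightarrow>
     (x < n \<and> y < n \<and> adj x y) \<or>
     (x < n \<and> n \<le> y \<and> y < 2 * n \<and> adj x (y - n)) \<or>
     (n \<le> x \<and> x < 2 * n \<and> y < n \<and> adj (x - n) y) \<or>
     (n \<le> x \<and> x < 2 * n \<and> y = 2 * n) \<or>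
     (x = 2 * n \<and> n \<le> y \<and> y < 2 * n)"

definition myc_weight :: "nat \<Rightarrow> (nat \<Rightarrow> nat) \<Rightarrow> nat \<Rightarrow> nat \<Rightarrow> nat \<Rightarrow> nat \<Rightarrow> nat" where
  "myc_weight n w D m T x =
     (if x < n then (m - T) * w x else if x < 2 * n then T * w (x - n) else T * D)"

definition myc_cover :: "nat \<Rightarrow> nat set list \<Rightarrow> nat \<Rightarrow> nat set list" where
  "myc_cover n l T =
     concat (replicate (length l - T) (map (\<lambda>I. I \<union> (\<lambda>i. i + n) ` I) l)) @
     concat (replicate T (map (insert (2 * n)) l)) @
     replicate (T * T) {n..<2 * n}"

lemma sum_myc_split:
  fixes n :: nat
  assumes "I \<subseteq> {..<2 * n + 1}"
  shows "sum f I = sum f (I \<inter> {..<n}) + (\<Sum>i | i < n \<and> i + n \<in> I. f (i + n))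
                   + (if 2 * n \<in> I then f (2 * n) else 0)"
proof -
  let ?B = "{i. i < n \<and> i + n \<in> I}"
  have "x < n \<or> x \<in> (\<lambda>i. i + n) ` ?B \<or> x = 2 * n" if "x \<in> I" for x
  proof -
    have "x < 2 * n + 1" using assms that by auto
    then show ?thesis
      using that by (cases "x < n"; cases "x = 2 * n") (auto intro!: image_eqI[of _ _ "x - n"])
  qed
  then have "I = (I \<inter> {..<n}) \<union> (\<lambda>i. i + n) ` ?B \<union> (I \<inter> {2 * n})"
    by auto
  also have "sum f \<dots> = sum f ((I \<inter> {..<n}) \<union> (\<lambda>i. i + n) ` ?B) + sum f (I \<inter> {2 * n})"
    by (rule sum.union_disjoint) auto
  also have "sum f ((I \<inter> {..<n}) \<union> (\<lambda>i. i + n) ` ?B)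
      = sum f (I \<inter> {..<n}) + sum f ((\<lambda>i. i + n) ` ?B)"
    by (rule sum.union_disjoint) auto
  also have "sum f ((\<lambda>i. i + n) ` ?B) = (\<Sum>i\<in>?B. f (i + n))"
    by (subst sum.reindex) auto
  finally show ?thesis by simp
qed

lemma sum_myc_weight:
  assumes "T \<le> m"
  shows "sum (myc_weight n w D m T) {..<2 * n + 1} = m * sum w {..<n} + T * D"
proof -
  let ?f = "myc_weight n w D m T"
  have "{..<2 * n + 1} \<inter> {..<n} = {..<n}" "{i. i < n \<and> i + n \<in> {..<2 * n + 1}} = {..<n}"
    by auto
  then have "sum ?f {..<2 * n + 1} = sum ?f {..<n} + (\<Sum>i<n. ?f (i + n)) + ?f (2 * n)"
    using sum_myc_split[of "{..<2 * n + 1}" n ?f] by simp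
  also have "\<dots> = (m - T) * sum w {..<n} + T * sum w {..<n} + T * D"
    by (simp add: myc_weight_def sum_distrib_left)
  also have "\<dots> = m * sum w {..<n} + T * D"
    using assms by (simp add: diff_mult_distrib algebra_simps)
  finally show ?thesis .
qed

lemma cover_count_map_eq:
  assumes "\<And>I. I \<in> set l \<Longrightarrow> v \<in> f I \<longleftrightarrow> P I"
  shows "cover_count (map f l) v = length (filter P l)"
  unfolding cover_count_map using assms by (metis filter_cong)

context weighted_triangle_free_graph
begin

lemma myc_adj_lt: "myc_adj n adj x y \<Longrightarrow> x < 2 * n + 1 \<and> y < 2 * n + 1"
  unfolding myc_adj_def by (auto dest: adj_lt)

lemma myc_adj_sym: "myc_adj n adj x y \<Longrightarrow> myc_adj n adj y x"
  using adj_sym unfolding myc_adj_def by auto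

lemma myc_adj_irrefl: "\<not> myc_adj n adj x x"
  using adj_irrefl unfolding myc_adj_def by auto

lemma myc_apex_indep_no_shadow:
  assumes "indep (myc_adj n adj) I" "2 * n \<in> I"
  shows "{i. i < n \<and> i + n \<in> I} = {}"
  using assms unfolding indep_def myc_adj_def by force

lemma myc_shadow_indep_disjoint_nbhd:
  assumes "indep (myc_adj n adj) I"
  shows "{i. i < n \<and> i + n \<in> I} \<inter> nbhd adj (I \<inter> {..<n}) = {}"
proof -
  have False if "i < n" "i + n \<in> I" "x \<in> I" "x < n" "adj x i" for i x
  proof -
    have "myc_adj n adj x (i + n)" using that unfolding myc_adj_def by auto
    then show False using assms that(2,3) unfolding indep_def by blast
  qed
  then show ?thesis unfolding nbhd_def by blast
qed

lemma sum_disjoint_le_total: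
  assumes "B \<subseteq> {..<n}" "C \<subseteq> {..<n}" "B \<inter> C = {}"
  shows "sum w B + sum w C \<le> sum w {..<n}"
proof -
  have "sum w B + sum w C = sum w (B \<union> C)"
    using assms by (intro sum.union_disjoint[symmetric]) (auto intro: finite_subset)
  also have "\<dots> \<le> sum w {..<n}" using assms by (intro sum_mono2) auto
  finally show ?thesis .
qed

lemma myc_adj_triangle_free:
  "myc_adj n adj x y \<Longrightarrow> myc_adj n adj y z \<Longrightarrow> myc_adj n adj x z \<Longrightarrow> False"
  unfolding myc_adj_def by (elim disjE; auto dest: adj_lt adj_triangle_free)

end

context fractional_certificate
begin

lemma myc_indep_weight_le:
  assumes I: "I \<subseteq> {..<2 * n + 1}" "indep (myc_adj n adj) I"
  shows "sum (myc_weight n w D (length cover) T) I \<le> length cover * D"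
proof -
  let ?m = "length cover" and ?A = "I \<inter> {..<n}" and ?B = "{i. i < n \<and> i + n \<in> I}"
  let ?f = "myc_weight n w D ?m T"
  have "sum ?f ?A = (?m - T) * sum w ?A" "(\<Sum>i\<in>?B. ?f (i + n)) = T * sum w ?B"
    "?f (2 * n) = T * D"
    by (simp_all add: myc_weight_def sum_distrib_left)
  then have split: "sum ?f I
      = (?m - T) * sum w ?A + T * sum w ?B + (if 2 * n \<in> I then T * D else 0)"
    using sum_myc_split[OF I(1), of ?f] by simp
  have A: "?A \<subseteq> {..<n}" "indep adj ?A"
    using I(2) unfolding indep_def myc_adj_def by auto
  show ?thesis
  proof (cases "2 * n \<in> I")
    case True
    then have "sum ?f I = (?m - T) * sum w ?A + T * D"
      using split myc_apex_indep_no_shadow[OF I(2)] by (simp del: Collect_empty_eq)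
    also have "\<dots> \<le> (?m - T) * D + T * D"
      using indep_weight_le[OF A] by simp
    also have "\<dots> = ?m * D" using T_le_length by (simp add: diff_mult_distrib)
    finally show ?thesis .
  next
    case False
    have "nbhd adj ?A \<subseteq> {..<n}" using adj_lt unfolding nbhd_def by blast
    then have BN: "sum w ?B + sum w (nbhd adj ?A) \<le> sum w {..<n}"
      using myc_shadow_indep_disjoint_nbhd[OF I(2)] by (intro sum_disjoint_le_total) auto
    have "sum ?f I \<le> T * sum w ?B + T * sum w (nbhd adj ?A)"
      using False split indep_weight_le_nbhd[OF A] by simp
    also have "\<dots> \<le> T * sum w {..<n}"
      using BN by (metis add_mult_distrib2 mult_le_mono2)
    finally have "sum ?f I \<le> T * sum w {..<n}" .
    then show ?thesis using weight_balance by (simp add: mult.commute)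
  qed
qed

lemma myc_cover_subset_indep:
  assumes "I \<in> set (myc_cover n cover T)"
  shows "I \<subseteq> {..<2 * n + 1} \<and> indep (myc_adj n adj) I"
proof -
  consider J where "J \<in> set cover" "I = J \<union> (\<lambda>i. i + n) ` J"
    | J where "J \<in> set cover" "I = insert (2 * n) J"
    | "I = {n..<2 * n}"
    using assms unfolding myc_cover_def by (auto split: if_splits)
  then show ?thesis
  proof cases
    case (1 J)
    have "x \<in> J \<or> (n \<le> x \<and> x - n \<in> J)" if "x \<in> I" for x
      using that 1(2) by auto
    then show ?thesis
      using 1 cover_subset[OF 1(1)] cover_indep[OF 1(1)] unfolding indep_def myc_adj_def
      by (auto 0 3)
  next
    case (2 J)
    then show ?thesis
      using cover_subset[OF 2(1)] cover_indep[OF 2(1)] unfolding indep_def myc_adj_def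
      by auto
  next
    case 3
    then show ?thesis unfolding indep_def myc_adj_def by auto
  qed
qed

lemma myc_cover_count:
  assumes "v < 2 * n + 1"
  shows "cover_count (myc_cover n cover T) v = T * length cover"
proof -
  let ?m = "length cover"
  have sub: "I \<subseteq> {..<n}" if "I \<in> set cover" for I using cover_subset[OF that] .
  consider "v < n" | "n \<le> v" "v < 2 * n" | "v = 2 * n" using assms by linarith
  then show ?thesis
  proof cases
    case 1
    have "cover_count (map (\<lambda>I. I \<union> (\<lambda>i. i + n) ` I) cover) v = cover_count cover v"
      unfolding cover_count_def[of cover] using 1 by (intro cover_count_map_eq) auto
    moreover have "cover_count (map (insert (2 * n)) cover) v = cover_count cover v"
      unfolding cover_count_def[of cover] using 1 by (intro cover_count_map_eq) auto
    ultimately show ?thesis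
      using 1 cover_count_eq[OF 1] T_le_length
      by (simp add: myc_cover_def diff_mult_distrib algebra_simps)
  next
    case 2
    have "cover_count (map (\<lambda>I. I \<union> (\<lambda>i. i + n) ` I) cover) v = cover_count cover (v - n)"
      unfolding cover_count_def[of cover] using 2 sub
      by (intro cover_count_map_eq) (force simp: image_iff intro: bexI[of _ "v - n"])
    moreover have "cover_count (map (insert (2 * n)) cover) v = 0"
      using 2 by (subst cover_count_map_eq[where P = "\<lambda>_. False"]) (auto dest!: sub)
    ultimately show ?thesis
      using 2 cover_count_eq[of "v - n"] T_le_length
      by (simp add: myc_cover_def diff_mult_distrib algebra_simps)
  next
    case 3
    have "cover_count (map (\<lambda>I. I \<union> (\<lambda>i. i + n) ` I) cover) v = 0"
      using 3 by (subst cover_count_map_eq[where P = "\<lambda>_. False"]) (auto dest!: sub)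
    moreover have "cover_count (map (insert (2 * n)) cover) v = ?m"
      using 3 by (subst cover_count_map_eq[where P = "\<lambda>_. True"]) auto
    ultimately show ?thesis using 3 by (simp add: myc_cover_def)
  qed
qed

lemma length_myc_cover: "length (myc_cover n cover T) = length cover ^ 2 + T ^ 2"
  using T_le_length
  by (simp add: myc_cover_def length_concat sum_list_replicate power2_eq_square
      diff_mult_distrib algebra_simps)

lemma mycielski_certificate:
  "fractional_certificate (2 * n + 1) (myc_adj n adj) (myc_weight n w D (length cover) T)
     (length cover * D) (myc_cover n cover T) (T * length cover)"
proof unfold_locales
  let ?m = "length cover"
  show "sum (myc_weight n w D ?m T) {..<2 * n + 1} * (T * ?m)
      = length (myc_cover n cover T) * (?m * D)"
    unfolding sum_myc_weight[OF T_le_length] length_myc_cover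
    using weight_balance by (simp add: power2_eq_square algebra_simps)
  have "T * ?m \<le> ?m * ?m" using T_le_length by (rule mult_le_mono1)
  then show "T * ?m \<le> length (myc_cover n cover T)"
    unfolding length_myc_cover power2_eq_square by linarith
qed (use myc_adj_lt myc_adj_sym myc_adj_irrefl myc_adj_triangle_free myc_indep_weight_le
      myc_cover_subset_indep myc_cover_count T_pos T_le_length D_pos length_myc_cover
      in \<open>auto simp: power2_eq_square\<close>)

lemma total_weight_pos: "1 \<le> sum w {..<n}"
proof -
  have "0 < length cover" using T_pos T_le_length by linarith
  then have "0 < sum w {..<n} * T" using weight_balance D_pos by simp
  then show ?thesis by simp
qed

lemma mycielski_ratio:
  defines "r \<equiv> real (sum w {..<n}) / real D"
  shows "real (sum (myc_weight n w D (length cover) T) {..<2 * n + 1}) / real (length cover * D)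
    = r + 1 / r"
proof -
  let ?m = "real (length cover)" and ?W = "real (sum w {..<n})"
  have pos: "?m > 0" "real D > 0" using T_pos T_le_length D_pos by auto
  have "?W > 0" using total_weight_pos by (simp only: of_nat_0_less_iff)
  have balance: "?W * real T = ?m * real D"
    using weight_balance by (metis of_nat_mult)
  have "real (sum (myc_weight n w D (length cover) T) {..<2 * n + 1}) / real (length cover * D)
      = (?m * ?W + real T * real D) / (?m * real D)"
    using sum_myc_weight[OF T_le_length] by simp
  also have "\<dots> = r + 1 / r"
    using pos \<open>?W > 0\<close> balance unfolding r_def by (simp add: field_simps)
  finally show ?thesis .
qed

end

lemma fractional_certificate_exists:
  "\<exists>n adj w D cover T. fractional_certificate n adj w D cover T \<and> k \<le> sum w {..<n} \<and>
     2 * real k + 1 \<le> (real (sum w {..<n}) / real D)\<^sup>2"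
proof (induction k)
  case 0
  have "fractional_certificate 1 (\<lambda>_ _. False) (\<lambda>_. 1) 1 [{0}] 1"
  proof unfold_locales
    fix I :: "nat set" assume "I \<subseteq> {..<1}"
    then have "I = {} \<or> I = {0}" by (auto dest: subset_singletonD)
    then show "sum (\<lambda>_. 1 :: nat) I \<le> 1" by auto
  qed (auto simp: indep_def cover_count_def)
  then show ?case by fastforce
next
  case (Suc k)
  then obtain n adj w D cover T where cert: "fractional_certificate n adj w D cover T"
    and k: "k \<le> sum w {..<n}" "2 * real k + 1 \<le> (real (sum w {..<n}) / real D)\<^sup>2"
    by blast
  interpret fractional_certificate n adj w D cover T by (rule cert)
  let ?m = "length cover" and ?r = "real (sum w {..<n}) / real D"
  have "?r > 0" using D_pos total_weight_pos by (simp del: of_nat_sum)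
  have "x\<^sup>2 + 2 \<le> (x + 1 / x)\<^sup>2" if "x > 0" for x :: real
    using that by (simp add: power2_sum)
  then have "?r\<^sup>2 + 2 \<le> (?r + 1 / ?r)\<^sup>2" using \<open>?r > 0\<close> .
  then have "2 * real (Suc k) + 1 \<le> (?r + 1 / ?r)\<^sup>2" using k(2) by simp
  moreover have "Suc k \<le> ?m * sum w {..<n} + T * D"
    using k(1) T_pos T_le_length D_pos by (metis add_mono mult_le_mono1 mult_1 Suc_eq_plus1 order_trans)
  ultimately show ?case
    using mycielski_certificate mycielski_ratio sum_myc_weight[OF T_le_length] by metis
qed

section \<open>Blow-ups and the family of graphs\<close>

text \<open>Vertex \<open>0\<close> is kept free for the apex of the cone.\<close>
definition blow_up_vertex :: "nat \<times> nat \<Rightarrow> nat" where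
  "blow_up_vertex p = Suc (prod_encode p)"

lemma inj_blow_up_vertex: "inj blow_up_vertex"
  unfolding blow_up_vertex_def by (metis injI inj_prod_encode nat.inject inj_eq)

context weighted_triangle_free_graph
begin

definition blow_up_pairs :: "(nat \<times> nat) set" where
  "blow_up_pairs = Sigma {..<n} (\<lambda>b. {..<w b})"

definition blow_up :: "nat set" where
  "blow_up = blow_up_vertex ` blow_up_pairs"

definition blow_up_adj :: "nat \<Rightarrow> nat \<Rightarrow> bool" where
  "blow_up_adj x y \<longleftrightarrow> (\<exists>p\<in>blow_up_pairs. \<exists>q\<in>blow_up_pairs.
     x = blow_up_vertex p \<and> y = blow_up_vertex q \<and> adj (fst p) (fst q))"

lemma finite_blow_up_pairs: "finite blow_up_pairs"
  unfolding blow_up_pairs_def by simp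

lemma card_blow_up: "card blow_up = sum w {..<n}"
  unfolding blow_up_def blow_up_pairs_def
  using inj_blow_up_vertex by (simp add: card_image inj_on_subset card_SigmaI)

lemma blow_up_adj_iff:
  "blow_up_adj (blow_up_vertex p) (blow_up_vertex q) \<longleftrightarrow>
     p \<in> blow_up_pairs \<and> q \<in> blow_up_pairs \<and> adj (fst p) (fst q)"
  unfolding blow_up_adj_def using inj_blow_up_vertex by (auto dest: injD)

text \<open>An independent set of the blow-up has at most \<open>w b\<close> vertices over each \<open>b\<close>, and
  the vertices \<open>b\<close> it lies over are independent.\<close>
lemma indep_blow_up_card_le:
  assumes I: "I \<subseteq> blow_up" "indep blow_up_adj I"
  shows "card I \<le> D"
proof -
  define P where "P = {p \<in> blow_up_pairs. blow_up_vertex p \<in> I}"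
  have "I = blow_up_vertex ` P" using I(1) unfolding P_def blow_up_def by auto
  then have "card I = card P" using inj_blow_up_vertex by (simp add: card_image inj_on_subset)
  also have "\<dots> \<le> card (Sigma (fst ` P) (\<lambda>b. {..<w b}))"
    using finite_blow_up_pairs by (intro card_mono) (force simp: P_def blow_up_pairs_def)+
  also have "\<dots> = sum w (fst ` P)"
    using finite_blow_up_pairs by (simp add: card_SigmaI P_def)
  also have "\<dots> \<le> D"
  proof (rule indep_weight_le)
    show "fst ` P \<subseteq> {..<n}" unfolding P_def blow_up_pairs_def by auto
    show "indep adj (fst ` P)"
      unfolding indep_def
    proof (intro ballI notI)
      fix a b assume "a \<in> fst ` P" "b \<in> fst ` P" "adj a b"
      then obtain p q where "p \<in> P" "q \<in> P" "adj (fst p) (fst q)" by auto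
      then have "blow_up_adj (blow_up_vertex p) (blow_up_vertex q)"
        by (simp add: blow_up_adj_iff P_def)
      then show False using I(2) \<open>p \<in> P\<close> \<open>q \<in> P\<close> unfolding indep_def P_def by blast
    qed
  qed
  finally show ?thesis .
qed

lemma triangle_free_cone_blow_up: "triangle_free_cone 0 blow_up blow_up_adj D"
proof
  show "finite blow_up" unfolding blow_up_def using finite_blow_up_pairs by simp
  show "0 \<notin> blow_up" unfolding blow_up_def blow_up_vertex_def by auto
next
  fix x y assume "blow_up_adj x y"
  then show "x \<in> blow_up \<and> y \<in> blow_up" unfolding blow_up_adj_def blow_up_def by auto
next
  fix x y assume "blow_up_adj x y"
  then show "blow_up_adj y x" unfolding blow_up_adj_def using adj_sym by blast
next
  fix x show "\<not> blow_up_adj x x"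
    unfolding blow_up_adj_def using adj_irrefl inj_blow_up_vertex by (auto dest: injD)
next
  fix x y z assume "blow_up_adj x y" "blow_up_adj y z" "blow_up_adj x z"
  then show False
    unfolding blow_up_adj_def using adj_triangle_free inj_blow_up_vertex by (auto dest: injD)
next
  fix I assume "I \<subseteq> blow_up" "indep blow_up_adj I"
  then show "card I \<le> D" by (rule indep_blow_up_card_le)
qed

end

lemma tau_star_ratio_bound:
  fixes W D t2 t3 :: real
  assumes "0 < D" "2 * D < W" "t2 \<le> W / 2" "2 * W - 4 * D \<le> 3 * t3"
  shows "0 < t3" "t2 \<le> (3 / 4 + (3 / 2) / (W / D - 2)) * t3"
proof -
  show "0 < t3" using assms by linarith
  have "t2 \<le> W / 2" by (rule assms(3))
  also have "\<dots> = 3 * W / (4 * (W - 2 * D)) * ((2 * W - 4 * D) / 3)"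
    using assms by (simp add: field_simps)
  also have "\<dots> \<le> 3 * W / (4 * (W - 2 * D)) * t3"
    using assms by (intro mult_left_mono) auto
  also have "3 * W / (4 * (W - 2 * D)) = 3 / 4 + (3 / 2) / (W / D - 2)"
    using assms by (simp add: field_simps)
  finally show "t2 \<le> (3 / 4 + (3 / 2) / (W / D - 2)) * t3" .
qed

lemma tau_star_ratio_graph_exists:
  "\<exists>V (E :: nat set set). simple_graph V E \<and> k < card V \<and> 0 < tau_star 3 E \<and>
     tau_star 2 E \<le> (3 / 4 + (3 / 2) / (sqrt (2 * real k + 5) - 2)) * tau_star 3 E"
proof -
  obtain n adj w D cover T where cert: "fractional_certificate n adj w D cover T"
    and k: "k + 2 \<le> sum w {..<n}" "2 * real (k + 2) + 1 \<le> (real (sum w {..<n}) / real D)\<^sup>2"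
    using fractional_certificate_exists by blast
  interpret fractional_certificate n adj w D cover T by (rule cert)
  interpret cone: triangle_free_cone 0 blow_up blow_up_adj D by (rule triangle_free_cone_blow_up)
  let ?W = "real (sum w {..<n})" and ?s = "sqrt (2 * real k + 5)"
  have D: "0 < real D" using D_pos by simp
  have "2 < ?s" by (simp add: real_less_rsqrt)
  have "?s \<le> ?W / real D"
    using k(2) by (intro real_le_lsqrt divide_nonneg_nonneg of_nat_0_le_iff) (auto simp: algebra_simps)
  have "2 * real D < ?s * real D" using \<open>2 < ?s\<close> D by simp
  also have "\<dots> \<le> ?W" using \<open>?s \<le> ?W / real D\<close> D by (simp only: pos_le_divide_eq)
  finally have W: "2 * real D < ?W" .
  have t2: "tau_star 2 cone.cone_edges \<le> ?W / 2"
    using cone.tau_star_2_cone_le card_blow_up by simp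
  have t3: "2 * ?W - 4 * real D \<le> 3 * tau_star 3 cone.cone_edges"
    using cone.tau_star_3_cone_ge card_blow_up by simp
  note bound = tau_star_ratio_bound[OF D W t2 t3]
  have "(3 / 2) / (?W / real D - 2) \<le> (3 / 2) / (?s - 2)"
    using \<open>2 < ?s\<close> \<open>?s \<le> ?W / real D\<close> by (intro divide_left_mono) auto
  then have "(3 / 4 + (3 / 2) / (?W / real D - 2)) * tau_star 3 cone.cone_edges
      \<le> (3 / 4 + (3 / 2) / (?s - 2)) * tau_star 3 cone.cone_edges"
    using bound(1) by (intro mult_right_mono) auto
  with bound(2) have "tau_star 2 cone.cone_edges
      \<le> (3 / 4 + (3 / 2) / (?s - 2)) * tau_star 3 cone.cone_edges"
    by (rule order_trans)
  moreover have "k < card (insert 0 blow_up)"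
    using k(1) card_blow_up cone.finite_L cone.apex_notin_L by simp
  ultimately show ?thesis
    using cone.simple_graph_cone bound(1) by (intro exI[of _ "insert 0 blow_up"] exI[of _ cone.cone_edges]) auto
qed

lemma tau_star_ratio_graph_family_exists:
  "\<exists>(V :: nat \<Rightarrow> nat set) (E :: nat \<Rightarrow> nat set set). \<forall>k.
     simple_graph (V k) (E k) \<and> k < card (V k) \<and> 0 < tau_star 3 (E k) \<and>
     tau_star 2 (E k) \<le> (3 / 4 + (3 / 2) / (sqrt (2 * real k + 5) - 2)) * tau_star 3 (E k)"
  using tau_star_ratio_graph_exists by metis

lemma tendsto_zero_majorant_reindex:
  fixes c :: "nat \<Rightarrow> nat" and d :: "nat \<Rightarrow> real"
  assumes c: "filterlim c at_top sequentially" and d: "d \<longlonglongrightarrow> 0"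
  shows "\<exists>\<epsilon>. \<epsilon> \<longlonglongrightarrow> 0 \<and> (\<forall>i. d i \<le> \<epsilon> (c i))"
proof -
  have fin: "finite {i. c i = N}" for N
  proof -
    obtain K where "\<forall>i\<ge>K. Suc N \<le> c i"
      using c unfolding filterlim_at_top eventually_sequentially by blast
    then have "{i. c i = N} \<subseteq> {..<K}" by (auto simp: not_less[symmetric])
    then show ?thesis by (rule finite_subset) simp
  qed
  define \<epsilon> where "\<epsilon> N = Max (insert 0 (d ` {i. c i = N}))" for N
  have "d i \<le> \<epsilon> (c i)" for i
    unfolding \<epsilon>_def using fin by (intro Max_ge) auto
  moreover have "\<epsilon> \<longlonglongrightarrow> 0"
  proof (rule LIMSEQ_I)
    fix r :: real assume "0 < r"
    then obtain K where K: "\<forall>i\<ge>K. norm (d i - 0) < r" using d LIMSEQ_D by blast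
    have "norm (\<epsilon> N - 0) < r" if "Suc (Max (c ` {..<K})) \<le> N" for N
    proof -
      have "d i < r" if "c i = N" for i
      proof -
        have "K \<le> i"
        proof (rule ccontr)
          assume "\<not> K \<le> i"
          then have "c i \<le> Max (c ` {..<K})" by (intro Max_ge) auto
          then show False using \<open>c i = N\<close> \<open>Suc _ \<le> N\<close> by simp
        qed
        then show ?thesis using K by auto
      qed
      then have "\<epsilon> N < r" unfolding \<epsilon>_def using fin \<open>0 < r\<close> by (auto simp: Max_less_iff)
      moreover have "0 \<le> \<epsilon> N" unfolding \<epsilon>_def using fin by (intro Max_ge) auto
      ultimately show ?thesis by simp
    qed
    then show "\<exists>N0. \<forall>N\<ge>N0. norm (\<epsilon> N - 0) < r" by blast
  qed
  ultimately show ?thesis by blast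
qed

theorem claim4:
  shows "\<exists>(V :: nat \<Rightarrow> nat set) (E :: nat \<Rightarrow> nat set set) (\<epsilon> :: nat \<Rightarrow> real).
           (\<forall>i. simple_graph (V i) (E i)) \<and>
           filterlim (\<lambda>i. card (V i)) at_top sequentially \<and>
           \<epsilon> \<longlonglongrightarrow> 0 \<and>
           (\<forall>i. tau_star 3 (E i) > 0 \<and>
                tau_star 2 (E i) \<le> (3/4 + \<epsilon> (card (V i))) * tau_star 3 (E i))"
proof -
  obtain V :: "nat \<Rightarrow> nat set" and E :: "nat \<Rightarrow> nat set set" where G: "\<forall>k. simple_graph (V k) (E k) \<and> k < card (V k) \<and>
      0 < tau_star 3 (E k) \<and>
      tau_star 2 (E k) \<le> (3 / 4 + (3 / 2) / (sqrt (2 * real k + 5) - 2)) * tau_star 3 (E k)"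
    using tau_star_ratio_graph_family_exists by blast
  then have "filterlim (\<lambda>k. card (V k)) at_top sequentially"
    by (intro filterlim_at_top_mono[OF filterlim_ident] always_eventually) (auto intro: less_imp_le)
  moreover have "(\<lambda>k. (3 / 2) / (sqrt (2 * real k + 5) - 2)) \<longlonglongrightarrow> 0" by real_asymp
  ultimately obtain \<epsilon> where \<epsilon>: "\<epsilon> \<longlonglongrightarrow> 0"
    "\<And>k. (3 / 2) / (sqrt (2 * real k + 5) - 2) \<le> \<epsilon> (card (V k))"
    using tendsto_zero_majorant_reindex by blast
  have "tau_star 2 (E k) \<le> (3 / 4 + \<epsilon> (card (V k))) * tau_star 3 (E k)" for k
    using G \<epsilon>(2)[of k] by (meson add_left_mono less_imp_le mult_right_mono order_trans)
  then show ?thesis using G \<open>filterlim _ at_top sequentially\<close> \<epsilon>(1) by blast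
qed

end
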